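(* Let $k\ge2$ be an integer and $p$ an odd prime. Let $$F(t)={}_{k}F_{k-1}\left(\tfrac12,\ldots,\tfrac12;1,\ldots,1\,\middle|\,t\right)=\sum_{n\ge0}\left(\frac{(\frac12)_n}{n!}\right)^{k}t^n,$$ with $k$ upper parameters equal to $\frac12$ and $k-1$ lower parameters equal to $1$. Then for all integers $s\ge1$, $$\frac{F(t)}{F(t^p)}\equiv \frac{F_{p^s}(t)}{F_{p^{s-1}}(t^p)}\pmod{p^s},$$ as power series in $\mathbb{Z}_p[[t]]$ (coefficientwise).
   Context: $(a)_n=a(a+1)\cdots(a+n-1)$ denotes the Pochhammer symbol. For a power series $G(t)$ and an integer $m\ge1$, $G_m(t)$ denotes its truncation: all terms of degree $\ge m$ are deleted; $G_m(t^p)$ denotes this truncation with $t$ replaced by $t^p$. For $k=2$ the series is $F(\frac12,\frac12,1\,|\,t)$. *)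

theory Defs
  imports "HOL-Computational_Algebra.Computational_Algebra"
begin

definition hypF :: "nat \<Rightarrow> rat fps" where
  "hypF k = Abs_fps (\<lambda>n. (pochhammer (1/2) n / fact n) ^ k)"

definition fps_trunc :: "nat \<Rightarrow> 'a::zero fps \<Rightarrow> 'a fps" where
  "fps_trunc m G = Abs_fps (\<lambda>n. if n < m then G $ n else 0)"

text \<open>Rational x is congruent to y modulo p^s in Z_p (i.e. x - y lies in p^s Z_(p)).\<close>
definition rat_cong_pow :: "nat \<Rightarrow> nat \<Rightarrow> rat \<Rightarrow> rat \<Rightarrow> bool" where
  "rat_cong_pow p s x y \<longleftrightarrow>
     (\<exists>a b :: int. \<not> int p dvd b \<and> x - y = of_int a / of_int b \<and> int p ^ s dvd a)"

definition fps_cong_pow :: "nat \<Rightarrow> nat \<Rightarrow> rat fps \<Rightarrow> rat fps \<Rightarrow> bool" where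
  "fps_cong_pow p s f g \<longleftrightarrow> (\<forall>n. rat_cong_pow p s (f $ n) (g $ n))"

end

theory Submission
  imports Defs
begin

(*
  Write A n = ((1/2)_n / n!)^k. Dwork's method applies because A n = \<Phi> n * A (n div p) with
  \<Phi> n p-integral and p-adically continuous: \<Phi> (n + z p^(t+1)) \<equiv> \<Phi> n (mod p^(t+1)).
  Here \<Phi> is the k-th power of the quotient of the prime-to-p factors of numerator and
  denominator of (1/2)_n / n! = \<Prod>i<n. (2i+1)/(2i+2), times at most one unpaired multiple of p;
  its continuity holds because on a block of p^(t+1) consecutive indices a rotation of the block
  matches the odd factors with the even ones modulo p^(t+1).

  After clearing the (p-adic unit) denominators the claim reads
  F(t) F_(p^(s-1))(t^p) \<equiv> F_(p^s)(t) F(t^p) (mod p^s), and the coefficient of t^(v+pn), v < p,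
  of the difference is the truncated antisymmetric sum
  \<Sum>j<p^(s-1), j\<le>n. A j A (n-j) (\<Phi> (v+p(n-j)) - \<Phi> (v+pj)).
  Such sums are divisible by p^s by induction on s: splitting j by its last p-adic digit and
  pairing every digit with its complement modulo p symmetrises the kernel and gains a factor p,
  and since p is odd the resulting factor 2 can be divided out.
*)

section \<open>p-adic divisibility of rationals\<close>

definition padic_dvd :: "nat \<Rightarrow> nat \<Rightarrow> rat \<Rightarrow> bool" where
  "padic_dvd p r x \<longleftrightarrow>
     (\<exists>a b :: int. \<not> int p dvd b \<and> x = of_int a / of_int b \<and> int p ^ r dvd a)"

lemma rat_cong_pow_iff_padic_dvd: "rat_cong_pow p s x y \<longleftrightarrow> padic_dvd p s (x - y)"
  by (simp add: rat_cong_pow_def padic_dvd_def)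

locale prime_number =
  fixes p :: nat
  assumes prime_p: "prime p"
begin

lemma not_dvd_mult:
  assumes "\<not> int p dvd b" "\<not> int p dvd c"
  shows "\<not> int p dvd (b * c)"
  using assms prime_p by (metis prime_dvd_mult_iff prime_nat_int_transfer)

lemma padic_dvd_of_int: "int p ^ r dvd a \<Longrightarrow> padic_dvd p r (of_int a)"
  unfolding padic_dvd_def using prime_gt_1_nat[OF prime_p]
  by (intro exI[of _ a] exI[of _ 1]) auto

lemma padic_dvd_0 [simp]: "padic_dvd p r 0"
  using padic_dvd_of_int[of r 0] by simp

lemma padic_dvd_integral_of_int [simp]: "padic_dvd p 0 (of_int a)"
  by (rule padic_dvd_of_int) simp

lemma padic_dvd_integral_of_nat [simp]: "padic_dvd p 0 (of_nat a)"
  using padic_dvd_integral_of_int[of "int a"] by simp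

lemma padic_dvd_integral_1 [simp]: "padic_dvd p 0 1"
  using padic_dvd_integral_of_int[of 1] by simp

lemma padic_dvd_add:
  assumes "padic_dvd p r x" "padic_dvd p r y"
  shows "padic_dvd p r (x + y)"
proof -
  obtain a b c d where h: "\<not> int p dvd b" "x = of_int a / of_int b" "int p ^ r dvd a"
     "\<not> int p dvd d" "y = of_int c / of_int d" "int p ^ r dvd c"
    using assms unfolding padic_dvd_def by blast
  have "b \<noteq> 0" "d \<noteq> 0" using h by auto
  then have "x + y = of_int (a * d + c * b) / of_int (b * d)"
    using h by (simp add: field_simps)
  moreover have "int p ^ r dvd a * d + c * b"
    using h by simp
  ultimately show ?thesis
    unfolding padic_dvd_def using h not_dvd_mult by blast
qed

lemma padic_dvd_uminus:
  assumes "padic_dvd p r x"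
  shows "padic_dvd p r (- x)"
proof -
  obtain a b where h: "\<not> int p dvd b" "x = of_int a / of_int b" "int p ^ r dvd a"
    using assms unfolding padic_dvd_def by blast
  then have "- x = of_int (- a) / of_int b" by simp
  then show ?thesis unfolding padic_dvd_def using h by (metis dvd_minus_iff)
qed

lemma padic_dvd_diff:
  assumes "padic_dvd p r x" "padic_dvd p r y"
  shows "padic_dvd p r (x - y)"
  using padic_dvd_add[OF assms(1) padic_dvd_uminus[OF assms(2)]] by simp

lemma padic_dvd_mult:
  assumes "padic_dvd p r x" "padic_dvd p r' y"
  shows "padic_dvd p (r + r') (x * y)"
proof -
  obtain a b c d where h: "\<not> int p dvd b" "x = of_int a / of_int b" "int p ^ r dvd a"
     "\<not> int p dvd d" "y = of_int c / of_int d" "int p ^ r' dvd c"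
    using assms unfolding padic_dvd_def by blast
  have "x * y = of_int (a * c) / of_int (b * d)"
    using h by simp
  moreover have "int p ^ (r + r') dvd a * c"
    using h by (simp add: power_add mult_dvd_mono)
  ultimately show ?thesis
    unfolding padic_dvd_def using not_dvd_mult h by blast
qed

lemma padic_dvd_mult_integral_right:
  "padic_dvd p r x \<Longrightarrow> padic_dvd p 0 y \<Longrightarrow> padic_dvd p r (x * y)"
  using padic_dvd_mult[of r x 0 y] by simp

lemma padic_dvd_mult_integral_left:
  "padic_dvd p 0 x \<Longrightarrow> padic_dvd p r y \<Longrightarrow> padic_dvd p r (x * y)"
  using padic_dvd_mult[of 0 x r y] by simp

lemma padic_dvd_divide_unit:
  assumes "padic_dvd p r x" "\<not> int p dvd c"
  shows "padic_dvd p r (x / of_int c)"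
proof -
  obtain a b where h: "\<not> int p dvd b" "x = of_int a / of_int b" "int p ^ r dvd a"
    using assms(1) unfolding padic_dvd_def by blast
  then have "x / of_int c = of_int a / of_int (b * c)" by simp
  then show ?thesis unfolding padic_dvd_def using h not_dvd_mult assms(2) by blast
qed

lemma padic_dvd_sum: "(\<And>i. i \<in> I \<Longrightarrow> padic_dvd p r (f i)) \<Longrightarrow> padic_dvd p r (sum f I)"
  by (induction I rule: infinite_finite_induct) (auto intro: padic_dvd_add)

lemma padic_dvd_integral_power: "padic_dvd p 0 x \<Longrightarrow> padic_dvd p 0 (x ^ k)"
  by (induction k) (simp_all add: padic_dvd_mult_integral_right)

lemma padic_dvd_power_diff:
  assumes "padic_dvd p 0 x" "padic_dvd p 0 y" "padic_dvd p r (x - y)"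
  shows "padic_dvd p r (x ^ k - y ^ k)"
proof -
  have "x ^ k - y ^ k = (x - y) * (\<Sum>i<k. y ^ (k - Suc i) * x ^ i)"
    by (rule power_diff_sumr2)
  moreover have "padic_dvd p 0 (\<Sum>i<k. y ^ (k - Suc i) * x ^ i)"
    using assms by (intro padic_dvd_sum padic_dvd_mult_integral_right padic_dvd_integral_power)
  ultimately show ?thesis
    using assms(3) padic_dvd_mult_integral_right by simp
qed

lemma padic_dvd_fps_mult_nth:
  assumes "\<And>n. padic_dvd p r (f $ n)" "\<And>n. padic_dvd p 0 (g $ n)"
  shows "padic_dvd p r ((f * g) $ n)"
  unfolding fps_mult_nth using assms by (intro padic_dvd_sum padic_dvd_mult_integral_right)

lemma padic_dvd_fps_inverse_nth:
  fixes f :: "rat fps"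
  assumes f0: "f $ 0 = 1" and f: "\<And>n. padic_dvd p 0 (f $ n)"
  shows "padic_dvd p 0 (inverse f $ n)"
proof (induction n rule: less_induct)
  case (less n)
  show ?case
  proof (cases n)
    case 0
    then show ?thesis using f0 by simp
  next
    case (Suc m)
    have "(\<Sum>i=0..n. f $ i * inverse f $ (n - i)) = (f * inverse f) $ n"
      by (simp add: fps_mult_nth)
    also have "\<dots> = 0"
      using inverse_mult_eq_1'[of f] f0 Suc by simp
    finally have "inverse f $ n = - (\<Sum>i=1..n. f $ i * inverse f $ (n - i))"
      using f0 by (simp add: sum.atLeast_Suc_atMost eq_neg_iff_add_eq_0)
    moreover have "padic_dvd p 0 (\<Sum>i=1..n. f $ i * inverse f $ (n - i))"
      using Suc by (intro padic_dvd_sum padic_dvd_mult_integral_right f less.IH) auto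
    ultimately show ?thesis by (simp add: padic_dvd_uminus)
  qed
qed

lemma padic_dvd_fps_divide_diff:
  fixes F T G G' :: "rat fps"
  assumes "G $ 0 = 1" "G' $ 0 = 1" "\<And>n. padic_dvd p 0 (G $ n)" "\<And>n. padic_dvd p 0 (G' $ n)"
    and "\<And>n. padic_dvd p r ((F * G' - T * G) $ n)"
  shows "padic_dvd p r ((F / G - T / G') $ n)"
proof -
  have "F / G - T / G' = (F * G' - T * G) * (inverse G * inverse G')"
    using assms(1,2) by (simp add: fps_divide_unit algebra_simps inverse_mult_eq_1')
  moreover have "padic_dvd p 0 ((inverse G * inverse G') $ m)" for m
    using assms(1-4) by (intro padic_dvd_fps_mult_nth padic_dvd_fps_inverse_nth)
  ultimately show ?thesis
    using assms(5) by (simp add: padic_dvd_fps_mult_nth)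
qed

end

section \<open>Dwork's congruences\<close>

lemma fps_compose_X_power_nth:
  fixes f :: "'a::comm_ring_1 fps"
  assumes "p > 0"
  shows "(f oo fps_X ^ p) $ N = (if p dvd N then f $ (N div p) else 0)"
proof -
  have "(f oo fps_X ^ p) $ N = (\<Sum>i\<in>{0..N}. if i = N div p \<and> p dvd N then f $ i else 0)"
    unfolding fps_compose_nth power_mult[symmetric] using assms
    by (intro sum.cong refl) (auto simp: mult.commute)
  also have "\<dots> = (if p dvd N then f $ (N div p) else 0)"
    by (cases "p dvd N") simp_all
  finally show ?thesis .
qed

lemma fps_mult_compose_X_power_nth:
  fixes f g :: "'a::comm_ring_1 fps"
  assumes "v < p"
  shows "(f * (g oo fps_X ^ p)) $ (v + p * n) = (\<Sum>b\<le>n. f $ (v + p * (n - b)) * g $ b)"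
proof -
  define N where "N = v + p * n"
  have p: "p > 0" using assms by simp
  have "(f * (g oo fps_X ^ p)) $ N = (\<Sum>i=0..N. (g oo fps_X ^ p) $ i * f $ (N - i))"
    by (subst mult.commute) (rule fps_mult_nth)
  also have "\<dots> = (\<Sum>i\<in>{i\<in>{0..N}. p dvd i}. g $ (i div p) * f $ (N - i))"
    unfolding fps_compose_X_power_nth[OF p] by (subst sum.inter_filter) (auto intro!: sum.cong)
  also have "{i\<in>{0..N}. p dvd i} = (\<lambda>b. p * b) ` {..n}"
  proof -
    have "p * b \<le> N \<longleftrightarrow> b \<le> n" for b
      using less_eq_div_iff_mult_less_eq[OF p, of b N] assms by (simp add: N_def mult.commute)
    then show ?thesis by (auto simp: dvd_def)
  qed
  also have "(\<Sum>i\<in>(\<lambda>b. p * b) ` {..n}. g $ (i div p) * f $ (N - i))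
      = (\<Sum>b\<le>n. g $ b * f $ (N - p * b))"
    using p by (subst sum.reindex) (auto simp: inj_on_def)
  also have "\<dots> = (\<Sum>b\<le>n. f $ (v + p * (n - b)) * g $ b)"
    unfolding N_def by (intro sum.cong refl) (simp add: diff_mult_distrib2 mult.commute)
  finally show ?thesis unfolding N_def .
qed

lemma sum_lessThan_mult_digits:
  fixes f :: "nat \<Rightarrow> 'a::comm_monoid_add"
  shows "(\<Sum>j<p * Q. f j) = (\<Sum>\<mu><p. \<Sum>\<nu><Q. f (\<mu> + p * \<nu>))"
proof -
  have "(\<Sum>\<mu><p. \<Sum>\<nu><Q. f (\<mu> + p * \<nu>)) = (\<Sum>(\<mu>, \<nu>)\<in>{..<p} \<times> {..<Q}. f (\<mu> + p * \<nu>))"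
    by (rule sum.cartesian_product)
  also have "\<dots> = (\<Sum>j<p * Q. f j)"
  proof (rule sum.reindex_bij_witness[where i = "\<lambda>j. (j mod p, j div p)" and j = "\<lambda>(\<mu>, \<nu>). \<mu> + p * \<nu>"])
    fix j assume j: "j \<in> {..<p * Q}"
    then have "p > 0" by (cases p) auto
    with j show "(j mod p, j div p) \<in> {..<p} \<times> {..<Q}"
      by (auto simp: div_less_iff_less_mult mult.commute)
  next
    fix x assume "x \<in> {..<p} \<times> {..<Q}"
    then obtain \<mu> \<nu> where x: "x = (\<mu>, \<nu>)" "\<mu> < p" "\<nu> < Q" by blast
    moreover have "\<mu> + p * \<nu> < p * Q"
      using x mult_le_mono2[of "Suc \<nu>" Q p] by simp
    ultimately show "(\<lambda>(\<mu>, \<nu>). \<mu> + p * \<nu>) x \<in> {..<p * Q}"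
      "((\<lambda>(\<mu>, \<nu>). \<mu> + p * \<nu>) x mod p, (\<lambda>(\<mu>, \<nu>). \<mu> + p * \<nu>) x div p) = x"
      by auto
  qed auto
  finally show ?thesis ..
qed

lemma digit_complement:
  fixes p L \<mu> :: nat
  assumes "\<mu> < p" "\<mu> \<le> L"
  defines "\<mu>' \<equiv> (L - \<mu>) mod p" and "d \<equiv> (L - \<mu>) div p"
  shows "\<mu>' < p" "\<mu>' \<le> L" "(L - \<mu>') mod p = \<mu>" "(L - \<mu>') div p = d"
    and "\<mu> + p * \<nu> \<le> L \<longleftrightarrow> \<nu> \<le> d"
    and "\<nu> \<le> d \<Longrightarrow> L - (\<mu> + p * \<nu>) = \<mu>' + p * (d - \<nu>)"
proof -
  have L: "L = \<mu> + \<mu>' + p * d"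
    using assms(2) div_mult_mod_eq[of "L - \<mu>" p] unfolding \<mu>'_def d_def by (simp add: mult.commute)
  show "\<mu>' < p" unfolding \<mu>'_def using assms(1) by simp
  then show "\<mu>' \<le> L" "(L - \<mu>') mod p = \<mu>" "(L - \<mu>') div p = d"
    using assms(1) L by simp_all
  show "\<mu> + p * \<nu> \<le> L \<longleftrightarrow> \<nu> \<le> d"
    using less_eq_div_iff_mult_less_eq[of p \<nu> "L - \<mu>"] assms unfolding d_def
    by (auto simp: mult.commute)
  show "\<nu> \<le> d \<Longrightarrow> L - (\<mu> + p * \<nu>) = \<mu>' + p * (d - \<nu>)"
    using L by (simp add: diff_mult_distrib2)
qed

lemma add_mult_less_mult_iff:
  fixes v p m Q :: nat
  assumes "v < p"
  shows "v + p * m < p * Q \<longleftrightarrow> m < Q"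
  using div_less_iff_less_mult[where m = "v + p * m" and n = Q and q = p] assms
  by (simp add: mult.commute)

definition (in prime_number) dwork_kernel :: "nat \<Rightarrow> (nat \<Rightarrow> nat \<Rightarrow> rat) \<Rightarrow> bool" where
  "dwork_kernel e D \<longleftrightarrow> (\<forall>x y. D x y = - D y x) \<and> (\<forall>x y. padic_dvd p e (D x y)) \<and>
     (\<forall>x y z t. padic_dvd p (t + e) (D (x + z * p ^ t) y - D x y))"

lemma (in prime_number) dwork_kernelD:
  assumes "dwork_kernel e D"
  shows "D x y = - D y x" "padic_dvd p e (D x y)"
    and "padic_dvd p (t + e) (D (x + z * p ^ t) y - D x y)"
  using assms unfolding dwork_kernel_def by blast+

lemma (in prime_number) dwork_kernel_digit_cong:
  assumes "dwork_kernel e D"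
  shows "padic_dvd p (Suc e) (D (a + p * x) (b + p * y) - D a b)"
proof -
  have "D (a + p * x) (b + p * y) - D a b =
      (D (a + x * p ^ 1) (b + p * y) - D a (b + p * y)) - (D (b + y * p ^ 1) a - D b a)"
    using dwork_kernelD(1)[OF assms, of a "b + p * y"] dwork_kernelD(1)[OF assms, of a b]
    by (simp add: mult.commute)
  then show ?thesis
    using padic_dvd_diff[OF dwork_kernelD(3)[OF assms, where x = a and z = x and t = 1]
        dwork_kernelD(3)[OF assms, where x = b and z = y and t = 1]]
    by simp
qed

locale odd_prime = prime_number +
  assumes odd_p: "odd p"
begin

lemma not_dvd_2: "\<not> p dvd 2"
  using dvd_imp_le[of p 2] prime_ge_2_nat[OF prime_p] odd_p by auto

lemma not_int_dvd_2: "\<not> int p dvd 2"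
  using not_dvd_2 int_dvd_int_iff[of p 2] by simp

lemma three_le_p: "3 \<le> p"
  using prime_ge_2_nat[OF prime_p] odd_p by (cases "p = 2") auto

end

locale dwork_family = odd_prime +
  fixes A \<Phi> :: "nat \<Rightarrow> rat"
  assumes A_0: "A 0 = 1"
    and A_factor: "\<And>n. A n = \<Phi> n * A (n div p)"
    and \<Phi>_integral: "\<And>n. padic_dvd p 0 (\<Phi> n)"
    and \<Phi>_cong: "\<And>n z t. padic_dvd p (t + 1) (\<Phi> (n + z * p ^ (t + 1)) - \<Phi> n)"
begin

lemma A_integral: "padic_dvd p 0 (A n)"
proof (induction n rule: less_induct)
  case (less n)
  show ?case
  proof (cases "n = 0")
    case True
    then show ?thesis using A_0 by simp
  next
    case False
    then have "n div p < n" using prime_gt_1_nat[OF prime_p] by simp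
    then show ?thesis
      using A_factor[of n] padic_dvd_mult[OF \<Phi>_integral less.IH] by simp
  qed
qed

definition dwork_sum :: "nat \<Rightarrow> nat \<Rightarrow> (nat \<Rightarrow> nat \<Rightarrow> rat) \<Rightarrow> rat" where
  "dwork_sum s L D = (\<Sum>j<p ^ s. if j \<le> L then A j * A (L - j) * D j (L - j) else 0)"

definition lift_kernel :: "nat \<Rightarrow> nat \<Rightarrow> (nat \<Rightarrow> nat \<Rightarrow> rat) \<Rightarrow> nat \<Rightarrow> nat \<Rightarrow> rat" where
  "lift_kernel \<alpha> \<beta> D x y = \<Phi> (\<alpha> + p * x) * \<Phi> (\<beta> + p * y) * D (\<alpha> + p * x) (\<beta> + p * y)"

lemma dwork_sum_add: "dwork_sum s L D + dwork_sum s L D' = dwork_sum s L (\<lambda>x y. D x y + D' x y)"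
  unfolding dwork_sum_def sum.distrib[symmetric] by (rule sum.cong) (auto simp: algebra_simps)

lemma dwork_sum_Suc:
  "dwork_sum (Suc s) L D =
     (\<Sum>\<mu>\<in>{\<mu>. \<mu> < p \<and> \<mu> \<le> L}. dwork_sum s ((L - \<mu>) div p) (lift_kernel \<mu> ((L - \<mu>) mod p) D))"
proof -
  define g where "g j = (if j \<le> L then A j * A (L - j) * D j (L - j) else 0)" for j
  have "dwork_sum (Suc s) L D = (\<Sum>\<mu><p. \<Sum>\<nu><p ^ s. g (\<mu> + p * \<nu>))"
    unfolding dwork_sum_def g_def power_Suc by (rule sum_lessThan_mult_digits)
  also have "\<dots> = (\<Sum>\<mu>\<in>{\<mu>. \<mu> < p \<and> \<mu> \<le> L}. \<Sum>\<nu><p ^ s. g (\<mu> + p * \<nu>))"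
    by (rule sum.mono_neutral_right) (auto simp: g_def intro!: sum.neutral split: if_splits)
  also have "\<dots> = (\<Sum>\<mu>\<in>{\<mu>. \<mu> < p \<and> \<mu> \<le> L}.
      dwork_sum s ((L - \<mu>) div p) (lift_kernel \<mu> ((L - \<mu>) mod p) D))"
  proof (intro sum.cong refl)
    fix \<mu> assume "\<mu> \<in> {\<mu>. \<mu> < p \<and> \<mu> \<le> L}"
    then have \<mu>: "\<mu> < p" "\<mu> \<le> L" by auto
    define \<mu>' d where "\<mu>' = (L - \<mu>) mod p" and "d = (L - \<mu>) div p"
    note digits = digit_complement[OF \<mu>, folded \<mu>'_def d_def]
    have "g (\<mu> + p * \<nu>) =
        (if \<nu> \<le> d then A \<nu> * A (d - \<nu>) * lift_kernel \<mu> \<mu>' D \<nu> (d - \<nu>) else 0)" for \<nu>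
    proof (cases "\<nu> \<le> d")
      case True
      have "A (\<mu> + p * \<nu>) = \<Phi> (\<mu> + p * \<nu>) * A \<nu>"
        using A_factor[of "\<mu> + p * \<nu>"] \<mu> by simp
      moreover have "A (\<mu>' + p * (d - \<nu>)) = \<Phi> (\<mu>' + p * (d - \<nu>)) * A (d - \<nu>)"
        using A_factor[of "\<mu>' + p * (d - \<nu>)"] digits(1) by simp
      ultimately show ?thesis
        using True digits(5,6) by (simp add: g_def lift_kernel_def)
    qed (simp add: g_def digits(5))
    then show "(\<Sum>\<nu><p ^ s. g (\<mu> + p * \<nu>)) = dwork_sum s d (lift_kernel \<mu> \<mu>' D)"
      by (simp add: dwork_sum_def)
  qed
  finally show ?thesis .
qed

lemma \<Phi>_digit_cong: "padic_dvd p 1 (\<Phi> (a + p * x) - \<Phi> a)"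
  using \<Phi>_cong[where n = a and z = x and t = 0] by (simp add: mult.commute)

lemma \<Phi>_mult_digit_cong: "padic_dvd p 1 (\<Phi> (a + p * x) * \<Phi> (b + p * y) - \<Phi> a * \<Phi> b)"
proof -
  have "\<Phi> (a + p * x) * \<Phi> (b + p * y) - \<Phi> a * \<Phi> b =
      (\<Phi> (a + p * x) - \<Phi> a) * \<Phi> (b + p * y) + \<Phi> a * (\<Phi> (b + p * y) - \<Phi> b)"
    by (simp add: algebra_simps)
  then show ?thesis
    using padic_dvd_add[OF padic_dvd_mult_integral_right[OF \<Phi>_digit_cong \<Phi>_integral]
        padic_dvd_mult_integral_left[OF \<Phi>_integral \<Phi>_digit_cong]]
    by simp
qed

lemma lift_kernel_bound:
  assumes "dwork_kernel e D"
  shows "padic_dvd p (Suc e) (lift_kernel \<alpha> \<beta> D x y + lift_kernel \<beta> \<alpha> D x y)"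
proof -
  have \<Phi>\<Phi>_digit_cong: "padic_dvd p (Suc e) (\<Phi> a * \<Phi> b * (D (a' + p * x) (b' + p * y) - D a' b'))"
    for a b a' b'
    by (intro padic_dvd_mult_integral_left padic_dvd_mult_integral_right \<Phi>_integral
        dwork_kernel_digit_cong[OF assms])
  \<comment> \<open>The terms with \<open>x = y = 0\<close> cancel by antisymmetry; each remaining one carries a factor \<open>p\<close>.\<close>
  have "lift_kernel \<alpha> \<beta> D x y + lift_kernel \<beta> \<alpha> D x y =
      \<Phi> (\<alpha> + p * x) * \<Phi> (\<beta> + p * y) * (D (\<alpha> + p * x) (\<beta> + p * y) - D \<alpha> \<beta>)
    + \<Phi> (\<beta> + p * x) * \<Phi> (\<alpha> + p * y) * (D (\<beta> + p * x) (\<alpha> + p * y) - D \<beta> \<alpha>)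
    + D \<alpha> \<beta> * ((\<Phi> (\<alpha> + p * x) * \<Phi> (\<beta> + p * y) - \<Phi> \<alpha> * \<Phi> \<beta>)
                - (\<Phi> (\<beta> + p * x) * \<Phi> (\<alpha> + p * y) - \<Phi> \<beta> * \<Phi> \<alpha>))"
    unfolding lift_kernel_def using dwork_kernelD(1)[OF assms, of \<beta> \<alpha>] by (simp add: algebra_simps)
  moreover have "padic_dvd p (e + 1) (D \<alpha> \<beta> * ((\<Phi> (\<alpha> + p * x) * \<Phi> (\<beta> + p * y) - \<Phi> \<alpha> * \<Phi> \<beta>)
                - (\<Phi> (\<beta> + p * x) * \<Phi> (\<alpha> + p * y) - \<Phi> \<beta> * \<Phi> \<alpha>)))"
    by (intro padic_dvd_mult dwork_kernelD(2)[OF assms] padic_dvd_diff \<Phi>_mult_digit_cong)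
  ultimately show ?thesis
    using padic_dvd_add[OF padic_dvd_add[OF \<Phi>\<Phi>_digit_cong \<Phi>\<Phi>_digit_cong]] by simp
qed

lemma lift_kernel_cong:
  assumes "dwork_kernel e D"
  shows "padic_dvd p (t + Suc e) (lift_kernel \<alpha> \<beta> D (x + z * p ^ t) y - lift_kernel \<alpha> \<beta> D x y)"
proof -
  define a b where "a = \<alpha> + p * x" and "b = \<beta> + p * y"
  have shift: "\<alpha> + p * (x + z * p ^ t) = a + z * p ^ (t + 1)"
    unfolding a_def by (simp add: algebra_simps)
  have "lift_kernel \<alpha> \<beta> D (x + z * p ^ t) y - lift_kernel \<alpha> \<beta> D x y
      = (\<Phi> (a + z * p ^ (t + 1)) - \<Phi> a) * (\<Phi> b * D (a + z * p ^ (t + 1)) b)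
        + \<Phi> a * \<Phi> b * (D (a + z * p ^ (t + 1)) b - D a b)"
    unfolding lift_kernel_def shift a_def[symmetric] b_def[symmetric] by (simp add: algebra_simps)
  moreover have "padic_dvd p (t + 1 + e)
      ((\<Phi> (a + z * p ^ (t + 1)) - \<Phi> a) * (\<Phi> b * D (a + z * p ^ (t + 1)) b))"
    by (intro padic_dvd_mult \<Phi>_cong padic_dvd_mult_integral_left \<Phi>_integral dwork_kernelD(2)[OF assms])
  moreover have "padic_dvd p (t + 1 + e) (\<Phi> a * \<Phi> b * (D (a + z * p ^ (t + 1)) b - D a b))"
    by (intro padic_dvd_mult_integral_left padic_dvd_mult_integral_right \<Phi>_integral
        dwork_kernelD(3)[OF assms])
  ultimately show ?thesis by (simp add: padic_dvd_add)
qed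

lemma dwork_kernel_lift:
  assumes "dwork_kernel e D"
  shows "dwork_kernel (Suc e) (\<lambda>x y. lift_kernel \<alpha> \<beta> D x y + lift_kernel \<beta> \<alpha> D x y)"
  unfolding dwork_kernel_def
proof (intro conjI allI)
  fix x y z t
  show "lift_kernel \<alpha> \<beta> D x y + lift_kernel \<beta> \<alpha> D x y = - (lift_kernel \<alpha> \<beta> D y x + lift_kernel \<beta> \<alpha> D y x)"
    unfolding lift_kernel_def
    using dwork_kernelD(1)[OF assms, of "\<alpha> + p * x" "\<beta> + p * y"]
      dwork_kernelD(1)[OF assms, of "\<beta> + p * x" "\<alpha> + p * y"]
    by (simp add: algebra_simps)
  show "padic_dvd p (Suc e) (lift_kernel \<alpha> \<beta> D x y + lift_kernel \<beta> \<alpha> D x y)"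
    using lift_kernel_bound[OF assms] .
  show "padic_dvd p (t + Suc e) (lift_kernel \<alpha> \<beta> D (x + z * p ^ t) y + lift_kernel \<beta> \<alpha> D (x + z * p ^ t) y
      - (lift_kernel \<alpha> \<beta> D x y + lift_kernel \<beta> \<alpha> D x y))"
    using padic_dvd_add[OF lift_kernel_cong[OF assms, where \<alpha> = \<alpha> and \<beta> = \<beta>]
        lift_kernel_cong[OF assms, where \<alpha> = \<beta> and \<beta> = \<alpha>]]
    by (simp add: add_diff_add)
qed

lemma padic_dvd_dwork_sum:
  assumes "dwork_kernel e D"
  shows "padic_dvd p (s + e) (dwork_sum s L D)"
  using assms
proof (induction s arbitrary: e L D)
  case 0
  then show ?case
    using dwork_kernelD(2)[OF 0, of 0 L]
    by (simp add: dwork_sum_def padic_dvd_mult_integral_left padic_dvd_mult_integral_right A_integral)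
next
  case (Suc s)
  define S where "S = {\<mu>. \<mu> < p \<and> \<mu> \<le> L}"
  define \<kappa> where "\<kappa> \<mu> = (L - \<mu>) mod p" for \<mu>
  define G where "G \<mu> = dwork_sum s ((L - \<mu>) div p) (lift_kernel \<mu> (\<kappa> \<mu>) D)" for \<mu>
  have \<kappa>: "\<kappa> \<mu> \<in> S" "\<kappa> (\<kappa> \<mu>) = \<mu>" "(L - \<kappa> \<mu>) div p = (L - \<mu>) div p" if "\<mu> \<in> S" for \<mu>
    using digit_complement[of \<mu> p L] that unfolding S_def \<kappa>_def by auto
  \<comment> \<open>Pairing each digit with its complement symmetrises the kernel, which gains a factor \<open>p\<close>.\<close>
  have "(\<Sum>\<mu>\<in>S. G \<mu>) = (\<Sum>\<mu>\<in>S. G (\<kappa> \<mu>))"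
    by (rule sum.reindex_bij_witness[where i = \<kappa> and j = \<kappa>]) (use \<kappa> in auto)
  then have "2 * (\<Sum>\<mu>\<in>S. G \<mu>) = (\<Sum>\<mu>\<in>S. G \<mu> + G (\<kappa> \<mu>))"
    by (simp add: sum.distrib)
  moreover have "padic_dvd p (Suc s + e) (G \<mu> + G (\<kappa> \<mu>))" if "\<mu> \<in> S" for \<mu>
  proof -
    have "G \<mu> + G (\<kappa> \<mu>) = dwork_sum s ((L - \<mu>) div p)
        (\<lambda>x y. lift_kernel \<mu> (\<kappa> \<mu>) D x y + lift_kernel (\<kappa> \<mu>) \<mu> D x y)"
      unfolding G_def using \<kappa>[OF that] by (simp add: dwork_sum_add)
    then show ?thesis
      using Suc.IH[OF dwork_kernel_lift[OF Suc.prems]] by simp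
  qed
  ultimately have "padic_dvd p (Suc s + e) (2 * (\<Sum>\<mu>\<in>S. G \<mu>) / of_int 2)"
    by (intro padic_dvd_divide_unit not_int_dvd_2) (simp add: padic_dvd_sum)
  then show ?case
    unfolding dwork_sum_Suc S_def[symmetric] G_def \<kappa>_def by simp
qed

lemma dwork_kernel_digit_diff: "dwork_kernel 1 (\<lambda>x y. \<Phi> (v + p * y) - \<Phi> (v + p * x))"
  unfolding dwork_kernel_def
proof (intro conjI allI)
  fix x y z t
  show "\<Phi> (v + p * y) - \<Phi> (v + p * x) = - (\<Phi> (v + p * x) - \<Phi> (v + p * y))"
    by simp
  show "padic_dvd p 1 (\<Phi> (v + p * y) - \<Phi> (v + p * x))"
    using padic_dvd_diff[OF \<Phi>_digit_cong \<Phi>_digit_cong, of v y v x] by simp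
  have "\<Phi> (v + p * y) - \<Phi> (v + p * (x + z * p ^ t)) - (\<Phi> (v + p * y) - \<Phi> (v + p * x))
      = - (\<Phi> ((v + p * x) + z * p ^ (t + 1)) - \<Phi> (v + p * x))"
    by (simp add: algebra_simps)
  then show "padic_dvd p (t + 1)
      (\<Phi> (v + p * y) - \<Phi> (v + p * (x + z * p ^ t)) - (\<Phi> (v + p * y) - \<Phi> (v + p * x)))"
    using padic_dvd_uminus[OF \<Phi>_cong] by presburger
qed

lemma dwork_congruence:
  assumes "v < p"
  shows "padic_dvd p (Suc r)
    (\<Sum>j\<le>n. if j < p ^ r then A (v + p * (n - j)) * A j - A (v + p * j) * A (n - j) else 0)"
proof -
  have Av: "A (v + p * j) = \<Phi> (v + p * j) * A j" for j
    using A_factor[of "v + p * j"] assms by simp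
  have "dwork_sum r n (\<lambda>x y. \<Phi> (v + p * y) - \<Phi> (v + p * x)) = (\<Sum>j<p ^ r. if j \<le> n then
      A (v + p * (n - j)) * A j - A (v + p * j) * A (n - j) else 0)"
    unfolding dwork_sum_def Av by (intro sum.cong refl) (simp add: right_diff_distrib mult_ac)
  also have "\<dots> = (\<Sum>j\<in>{j. j < p ^ r \<and> j \<le> n}. A (v + p * (n - j)) * A j - A (v + p * j) * A (n - j))"
    by (rule sum.mono_neutral_cong_right) auto
  also have "\<dots> = (\<Sum>j\<le>n. if j < p ^ r then A (v + p * (n - j)) * A j - A (v + p * j) * A (n - j) else 0)"
    by (rule sum.mono_neutral_cong_left) auto
  finally show ?thesis
    using padic_dvd_dwork_sum[OF dwork_kernel_digit_diff[of v], of r n] by (simp only: Suc_eq_plus1)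
qed

lemma dwork_difference_nth:
  assumes "v < p"
  shows "(Abs_fps A * (fps_trunc (p ^ r) (Abs_fps A) oo fps_X ^ p)
      - fps_trunc (p ^ Suc r) (Abs_fps A) * (Abs_fps A oo fps_X ^ p)) $ (v + p * n)
    = (\<Sum>j\<le>n. if j < p ^ r then A (v + p * (n - j)) * A j - A (v + p * j) * A (n - j) else 0)"
proof -
  have "(Abs_fps A * (fps_trunc (p ^ r) (Abs_fps A) oo fps_X ^ p)) $ (v + p * n)
      = (\<Sum>j\<le>n. if j < p ^ r then A (v + p * (n - j)) * A j else 0)"
    unfolding fps_mult_compose_X_power_nth[OF assms]
    by (auto simp: fps_trunc_def intro!: sum.cong)
  moreover have "(fps_trunc (p ^ Suc r) (Abs_fps A) * (Abs_fps A oo fps_X ^ p)) $ (v + p * n)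
      = (\<Sum>j\<le>n. if n - j < p ^ r then A (v + p * (n - j)) * A j else 0)"
    unfolding fps_mult_compose_X_power_nth[OF assms]
    by (auto simp: fps_trunc_def add_mult_less_mult_iff[OF assms] intro!: sum.cong)
  moreover have "\<dots> = (\<Sum>j\<le>n. if j < p ^ r then A (v + p * j) * A (n - j) else 0)"
    by (rule sum.reindex_bij_witness[where i = "\<lambda>j. n - j" and j = "\<lambda>j. n - j"]) auto
  ultimately show ?thesis
    by (simp add: sum.inter_filter[symmetric] sum_subtractf)
qed

theorem dwork_fps_congruence:
  "fps_cong_pow p (Suc r) (Abs_fps A / (Abs_fps A oo fps_X ^ p))
     (fps_trunc (p ^ Suc r) (Abs_fps A) / (fps_trunc (p ^ r) (Abs_fps A) oo fps_X ^ p))"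
proof -
  define F where "F = Abs_fps A"
  have p: "p > 0" using prime_gt_0_nat[OF prime_p] .
  have "padic_dvd p (Suc r) ((F * (fps_trunc (p ^ r) F oo fps_X ^ p)
      - fps_trunc (p ^ Suc r) F * (F oo fps_X ^ p)) $ N)" for N
    using dwork_difference_nth[of "N mod p" r "N div p"] dwork_congruence[of "N mod p" r "N div p"] p
    unfolding F_def by simp
  moreover have "(F oo fps_X ^ p) $ 0 = 1" "(fps_trunc (p ^ r) F oo fps_X ^ p) $ 0 = 1"
    using p by (simp_all add: F_def fps_trunc_def A_0)
  moreover have "padic_dvd p 0 ((F oo fps_X ^ p) $ n)"
    "padic_dvd p 0 ((fps_trunc (p ^ r) F oo fps_X ^ p) $ n)" for n
    using p by (simp_all add: fps_compose_X_power_nth F_def fps_trunc_def A_integral)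
  ultimately have "padic_dvd p (Suc r)
      ((F / (F oo fps_X ^ p) - fps_trunc (p ^ Suc r) F / (fps_trunc (p ^ r) F oo fps_X ^ p)) $ n)" for n
    by (intro padic_dvd_fps_divide_diff)
  then show ?thesis
    unfolding fps_cong_pow_def rat_cong_pow_iff_padic_dvd F_def by simp
qed

end

section \<open>The coefficients of the hypergeometric series\<close>

definition poch_half :: "nat \<Rightarrow> rat" where
  "poch_half n = pochhammer (1/2) n / fact n"

lemma poch_half_0 [simp]: "poch_half 0 = 1"
  by (simp add: poch_half_def)

lemma poch_half_Suc: "poch_half (Suc n) = poch_half n * (of_nat (2 * n + 1) / of_nat (2 * n + 2))"
  by (simp add: poch_half_def pochhammer_Suc field_simps)

definition prod_prime_to :: "nat \<Rightarrow> (nat \<Rightarrow> nat) \<Rightarrow> nat set \<Rightarrow> int" where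
  "prod_prime_to p f I = (\<Prod>i\<in>{i\<in>I. \<not> p dvd f i}. int (f i))"

lemma prod_prime_to_union:
  assumes "finite I" "finite J" "I \<inter> J = {}"
  shows "prod_prime_to p f (I \<union> J) = prod_prime_to p f I * prod_prime_to p f J"
proof -
  have "{i\<in>I \<union> J. \<not> p dvd f i} = {i\<in>I. \<not> p dvd f i} \<union> {i\<in>J. \<not> p dvd f i}" by auto
  then show ?thesis
    unfolding prod_prime_to_def using assms by (simp add: prod.union_disjoint disjoint_iff)
qed

lemma prod_prime_to_lessThan_add:
  "prod_prime_to p f {..<n + M} = prod_prime_to p f {..<n} * prod_prime_to p f {n..<n + M}"
proof -
  have "{..<n + M} = {..<n} \<union> {n..<n + M}" "{..<n} \<inter> {n..<n + M} = {}" by auto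
  then show ?thesis
    using prod_prime_to_union[of "{..<n}" "{n..<n + M}" p f] by simp
qed

lemma prod_prime_to_lessThan_Suc:
  "prod_prime_to p f {..<Suc n} = prod_prime_to p f {..<n} * (if p dvd f n then 1 else int (f n))"
proof (cases "p dvd f n")
  case True
  then have "{i\<in>{..<Suc n}. \<not> p dvd f i} = {i\<in>{..<n}. \<not> p dvd f i}"
    by (auto simp: less_Suc_eq)
  then show ?thesis unfolding prod_prime_to_def using True by simp
next
  case False
  then have "{i\<in>{..<Suc n}. \<not> p dvd f i} = insert n {i\<in>{..<n}. \<not> p dvd f i}"
    by (auto simp: less_Suc_eq)
  then show ?thesis unfolding prod_prime_to_def using False by (simp add: mult.commute)
qed

lemma prod_prime_to_not_dvd:
  assumes "prime p"
  shows "\<not> int p dvd prod_prime_to p f I"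
proof (cases "finite {i\<in>I. \<not> p dvd f i}")
  case True
  have "prime (int p)" using assms by simp
  then show ?thesis
    unfolding prod_prime_to_def using True by (subst prime_dvd_prod_iff) auto
next
  case False
  then show ?thesis
    unfolding prod_prime_to_def using prime_gt_1_nat[OF assms] by simp
qed

lemma prod_mod_cong:
  fixes f g :: "nat \<Rightarrow> int"
  assumes "\<And>i. i \<in> I \<Longrightarrow> f i mod c = g i mod c"
  shows "prod f I mod c = prod g I mod c"
proof -
  have "prod f I mod c = prod (\<lambda>i. f i mod c) I mod c" by (simp add: mod_prod_eq)
  also have "\<dots> = prod (\<lambda>i. g i mod c) I mod c" using assms by (simp cong: prod.cong)
  also have "\<dots> = prod g I mod c" by (simp add: mod_prod_eq)
  finally show ?thesis .
qed

lemma prod_prime_to_bij_cong: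
  assumes "bij_betw \<tau> I J" "p dvd q"
    and "\<And>i. i \<in> I \<Longrightarrow> int q dvd int (g (\<tau> i)) - int (f i)"
  shows "prod_prime_to p f I mod int q = prod_prime_to p g J mod int q"
proof -
  have "p dvd g (\<tau> i) \<longleftrightarrow> p dvd f i" if "i \<in> I" for i
  proof -
    have "int p dvd int (g (\<tau> i)) - int (f i)"
      using assms(2) assms(3)[OF that] by (meson dvd_trans int_dvd_int_iff)
    then show ?thesis
      using dvd_add_right_iff[of "int p" "int (g (\<tau> i)) - int (f i)" "int (f i)"] by simp
  qed
  then have "bij_betw \<tau> {i\<in>I. \<not> p dvd f i} {j\<in>J. \<not> p dvd g j}"
    by (intro bij_betw_Collect[OF assms(1)]) auto
  then have "prod_prime_to p g J = (\<Prod>i\<in>{i\<in>I. \<not> p dvd f i}. int (g (\<tau> i)))"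
    unfolding prod_prime_to_def by (rule prod.reindex_bij_betw[symmetric])
  moreover have "prod_prime_to p f I mod int q = (\<Prod>i\<in>{i\<in>I. \<not> p dvd f i}. int (g (\<tau> i))) mod int q"
    unfolding prod_prime_to_def
    by (rule prod_mod_cong) (use assms(3) in \<open>auto simp: mod_eq_dvd_iff dvd_diff_commute\<close>)
  ultimately show ?thesis by simp
qed

lemma block_rotation:
  fixes q m M :: nat
  assumes "odd q" "q dvd M" "0 < M"
  obtains \<tau> where "bij_betw \<tau> {m..<m + M} {m..<m + M}"
    and "\<And>i. i \<in> {m..<m + M} \<Longrightarrow> int q dvd int (2 * \<tau> i + 2) - int (2 * i + 1)"
proof -
  have q: "0 < q" "q \<le> M" using assms(2,3) by (auto intro: dvd_imp_le)
  define h where "h = (q + 1) div 2"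
  have h: "2 * h = q + 1" "h \<le> M" unfolding h_def using assms(1) q by auto
  \<comment> \<open>Rotating the block by \<open>-h\<close> works because \<open>2 h \<equiv> 1 (mod q)\<close>.\<close>
  define \<tau> where "\<tau> i = m + (i - m + (M - h)) mod M" for i
  define \<sigma> where "\<sigma> j = m + (j - m + h) mod M" for j
  have \<tau>_range: "\<tau> i \<in> {m..<m + M}" and \<sigma>_range: "\<sigma> i \<in> {m..<m + M}" for i
    unfolding \<tau>_def \<sigma>_def using assms(3) by auto
  have "\<sigma> (\<tau> i) = i \<and> \<tau> (\<sigma> i) = i" if "i \<in> {m..<m + M}" for i
  proof -
    have "i - m < M" using that by auto
    then have wrap: "(i - m + M) mod M = i - m" by simp
    have "\<sigma> (\<tau> i) = m + (i - m + (M - h) + h) mod M" "\<tau> (\<sigma> i) = m + (i - m + h + (M - h)) mod M"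
      unfolding \<sigma>_def \<tau>_def by (simp_all add: mod_add_left_eq)
    moreover have "i - m + (M - h) + h = i - m + M" "i - m + h + (M - h) = i - m + M"
      using h(2) by simp_all
    ultimately show ?thesis using wrap that by simp
  qed
  then have "bij_betw \<tau> {m..<m + M} {m..<m + M}"
    by (intro bij_betw_byWitness[where f' = \<sigma>]) (use \<tau>_range \<sigma>_range in auto)
  moreover have "int q dvd int (2 * \<tau> i + 2) - int (2 * i + 1)" if "i \<in> {m..<m + M}" for i
  proof -
    define k where "k = (i - m + (M - h)) div M"
    have "int (i - m + (M - h)) = int M * int k + int (\<tau> i - m)"
      unfolding k_def \<tau>_def by (metis add_diff_cancel_left' div_mult_mod_eq mult.commute of_nat_add of_nat_mult)
    then have "int (2 * \<tau> i + 2) - int (2 * i + 1) = int M * (2 - 2 * int k) - int q"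
      using that h \<tau>_range[of i] by (simp add: algebra_simps)
    then show ?thesis using assms(2) by simp
  qed
  ultimately show ?thesis using that by blast
qed

lemma prod_prime_to_block_cong:
  fixes p q m M :: nat
  assumes "odd q" "p dvd q" "q dvd M"
  shows "prod_prime_to p (\<lambda>i. 2 * i + 1) {m..<m + M} mod int q
       = prod_prime_to p (\<lambda>i. 2 * i + 2) {m..<m + M} mod int q"
proof (cases "M = 0")
  case True
  then show ?thesis by (simp add: prod_prime_to_def)
next
  case False
  then obtain \<tau> where "bij_betw \<tau> {m..<m + M} {m..<m + M}"
    and "\<And>i. i \<in> {m..<m + M} \<Longrightarrow> int q dvd int (2 * \<tau> i + 2) - int (2 * i + 1)"
    using block_rotation[OF assms(1,3)] by blast
  then show ?thesis
    by (rule prod_prime_to_bij_cong[OF _ assms(2)])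
qed

text \<open>The odd multiples of \<open>p\<close> among the factors \<open>2 i + 1\<close>, \<open>i < n\<close>, are the \<open>p (2 m + 1)\<close> with
  \<open>m < n div p\<close>, which pair off with the even multiples \<open>p (2 m + 2)\<close> into \<open>poch_half (n div p)\<close>,
  and, when \<open>2 (n mod p) > p\<close>, the unpaired factor \<open>p (2 (n div p) + 1)\<close>.\<close>

definition boundary_factor :: "nat \<Rightarrow> nat \<Rightarrow> nat" where
  "boundary_factor p n = (if p < 2 * (n mod p) then p * (2 * (n div p) + 1) else 1)"

definition dwork_quotient :: "nat \<Rightarrow> nat \<Rightarrow> rat" where
  "dwork_quotient p n = of_nat (boundary_factor p n)
     * of_int (prod_prime_to p (\<lambda>i. 2 * i + 1) {..<n})
     / of_int (prod_prime_to p (\<lambda>i. 2 * i + 2) {..<n})"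

lemma boundary_factor_cong:
  assumes "0 < p"
  shows "int p ^ (t + 1) dvd int (boundary_factor p (n + z * p ^ (t + 1))) - int (boundary_factor p n)"
proof -
  have "(n + z * p ^ (t + 1)) mod p = n mod p" "(n + z * p ^ (t + 1)) div p = n div p + z * p ^ t"
    using assms by (simp_all add: mult.left_commute[of z])
  then have "int (boundary_factor p (n + z * p ^ (t + 1))) - int (boundary_factor p n)
      = (if p < 2 * (n mod p) then int p ^ (t + 1) * (2 * int z) else 0)"
    unfolding boundary_factor_def by (simp add: algebra_simps)
  then show ?thesis by simp
qed

context odd_prime
begin

lemma dvd_odd_iff: "p dvd 2 * n + 1 \<longleftrightarrow> 2 * (n mod p) + 1 = p"
proof -
  have "n = n mod p + p * (n div p)" by simp
  then have "2 * n + 1 = (2 * (n mod p) + 1) + p * (2 * (n div p))"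
    by (metis add.assoc add.commute mult.left_commute distrib_left)
  then have "p dvd 2 * n + 1 \<longleftrightarrow> p dvd (2 * (n mod p) + 1) + p * (2 * (n div p))"
    by simp
  also have "\<dots> \<longleftrightarrow> p dvd 2 * (n mod p) + 1"
    by (metis dvd_add_times_triv_right_iff mult.commute)
  also have "\<dots> \<longleftrightarrow> 2 * (n mod p) + 1 = p"
  proof
    assume "p dvd 2 * (n mod p) + 1"
    then obtain c where c: "2 * (n mod p) + 1 = p * c" by blast
    moreover have "n mod p < p" using three_le_p by simp
    ultimately have "p * c < p * 2" by linarith
    with c have "c = 1" by (cases c) auto
    then show "2 * (n mod p) + 1 = p" using c by simp
  qed auto
  finally show ?thesis .
qed

lemma dvd_even_iff: "p dvd 2 * n + 2 \<longleftrightarrow> Suc (n mod p) = p"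
proof -
  have "p dvd 2 * n + 2 \<longleftrightarrow> p dvd 2 * Suc n"
    by simp
  also have "\<dots> \<longleftrightarrow> p dvd Suc n"
    using prime_dvd_mult_iff[OF prime_p, of 2 "Suc n"] not_dvd_2 by blast
  also have "\<dots> \<longleftrightarrow> Suc (n mod p) = p"
    using three_le_p by (simp add: dvd_eq_mod_eq_0 mod_Suc)
  finally show ?thesis .
qed

text \<open>The multiples of \<open>p\<close> among \<open>2 n + 1\<close> and \<open>2 n + 2\<close> are absorbed by the boundary factor and by
  \<open>poch_half (n div p)\<close>.\<close>

lemma boundary_factor_step:
  "of_nat (boundary_factor p (Suc n)) * poch_half (Suc n div p)
     * (if p dvd 2 * n + 2 then of_nat (2 * n + 2) else 1)
   = of_nat (boundary_factor p n) * poch_half (n div p)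
     * (if p dvd 2 * n + 1 then of_nat (2 * n + 1) else 1)"
proof -
  define v u where "v = n mod p" and "u = n div p"
  have n: "n = v + p * u" and v: "v < p"
    using three_le_p by (simp_all add: v_def u_def)
  note digit = v_def[symmetric] u_def[symmetric]
  consider "Suc v < p" "2 * v + 1 \<noteq> p" | "2 * v + 1 = p" | "Suc v = p"
    using v by linarith
  then show ?thesis
  proof cases
    case 1
    then have "Suc n mod p = Suc v" "Suc n div p = u"
      unfolding n using div_mult_self2[of p "Suc v" u] mod_mult_self2[of "Suc v" p u] by simp_all
    moreover have "p < 2 * Suc v \<longleftrightarrow> p < 2 * v"
      using 1 odd_p by presburger
    ultimately show ?thesis
      using 1 unfolding boundary_factor_def dvd_odd_iff dvd_even_iff digit by simp
  next
    case 2
    then have "Suc v < p" using three_le_p by simp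
    then have "Suc n mod p = Suc v" "Suc n div p = u"
      unfolding n using div_mult_self2[of p "Suc v" u] mod_mult_self2[of "Suc v" p u] by simp_all
    moreover have "2 * n + 1 = p * (2 * u + 1)"
      using 2 unfolding n by (simp add: algebra_simps)
    ultimately show ?thesis
      using 2 \<open>Suc v < p\<close> unfolding boundary_factor_def dvd_odd_iff dvd_even_iff digit by simp
  next
    case 3
    then have "Suc n = p * Suc u"
      unfolding n by simp
    then have "Suc n mod p = 0" "Suc n div p = Suc u"
      using three_le_p by simp_all
    moreover have "2 * n + 2 = p * (2 * u + 2)"
      using 3 unfolding n by (simp add: algebra_simps)
    ultimately show ?thesis
      using 3 three_le_p unfolding boundary_factor_def dvd_odd_iff dvd_even_iff digit
      by (simp add: poch_half_Suc field_simps)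
  qed
qed

lemma poch_half_factor: "poch_half n = dwork_quotient p n * poch_half (n div p)"
proof (induction n)
  case 0
  then show ?case by (simp add: dwork_quotient_def boundary_factor_def prod_prime_to_def)
next
  case (Suc n)
  define X Y :: rat
    where "X = (if p dvd 2 * n + 1 then of_nat (2 * n + 1) else 1)"
      and "Y = (if p dvd 2 * n + 2 then of_nat (2 * n + 2) else 1)"
  define X' Y' :: rat
    where "X' = (if p dvd 2 * n + 1 then 1 else of_nat (2 * n + 1))"
      and "Y' = (if p dvd 2 * n + 2 then 1 else of_nat (2 * n + 2))"
  define B B' Num Den :: rat
    where "B = of_nat (boundary_factor p n)" and "B' = of_nat (boundary_factor p (Suc n))"
      and "Num = of_int (prod_prime_to p (\<lambda>i. 2 * i + 1) {..<n})"
      and "Den = of_int (prod_prime_to p (\<lambda>i. 2 * i + 2) {..<n})"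
  have "Y \<noteq> 0"
    unfolding Y_def by simp
  have "poch_half (Suc n) = B * Num / Den * poch_half (n div p) * (X * X' / (Y * Y'))"
    unfolding poch_half_Suc Suc.IH X_def X'_def Y_def Y'_def
    by (simp add: dwork_quotient_def B_def Num_def Den_def)
  also have "\<dots> = (B * poch_half (n div p) * X) * (Num * X') / (Den * Y * Y')"
    by (simp add: field_simps)
  also have "B * poch_half (n div p) * X = B' * poch_half (Suc n div p) * Y"
    unfolding B_def B'_def X_def Y_def by (rule boundary_factor_step[symmetric])
  also have "B' * poch_half (Suc n div p) * Y * (Num * X') / (Den * Y * Y')
      = B' * (Num * X') / (Den * Y') * poch_half (Suc n div p)"
    using \<open>Y \<noteq> 0\<close> by (simp add: field_simps)
  also have "B' * (Num * X') / (Den * Y') = dwork_quotient p (Suc n)"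
    unfolding dwork_quotient_def prod_prime_to_lessThan_Suc B'_def Num_def Den_def X'_def Y'_def
    by simp
  finally show ?case .
qed

lemma dwork_quotient_integral: "padic_dvd p 0 (dwork_quotient p n)"
  unfolding dwork_quotient_def
  by (intro padic_dvd_divide_unit padic_dvd_mult_integral_right prod_prime_to_not_dvd prime_p
      padic_dvd_integral_of_nat padic_dvd_integral_of_int)

lemma padic_dvd_block_diff:
  "padic_dvd p (t + 1) (of_int (prod_prime_to p (\<lambda>i. 2 * i + 1) {n..<n + z * p ^ (t + 1)})
     - of_int (prod_prime_to p (\<lambda>i. 2 * i + 2) {n..<n + z * p ^ (t + 1)}))"
proof -
  have "int p ^ (t + 1) dvd prod_prime_to p (\<lambda>i. 2 * i + 1) {n..<n + z * p ^ (t + 1)}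
      - prod_prime_to p (\<lambda>i. 2 * i + 2) {n..<n + z * p ^ (t + 1)}"
    using prod_prime_to_block_cong[of "p ^ (t + 1)" p "z * p ^ (t + 1)" n] odd_p
    by (simp add: mod_eq_dvd_iff)
  then show ?thesis
    by (metis of_int_diff padic_dvd_of_int)
qed

lemma dwork_quotient_cong:
  "padic_dvd p (t + 1) (dwork_quotient p (n + z * p ^ (t + 1)) - dwork_quotient p n)"
proof -
  define M where "M = z * p ^ (t + 1)"
  define B :: "nat \<Rightarrow> rat" where "B m = of_nat (boundary_factor p m)" for m
  define Num Den :: "nat \<Rightarrow> rat"
    where "Num m = of_int (prod_prime_to p (\<lambda>i. 2 * i + 1) {..<m})"
      and "Den m = of_int (prod_prime_to p (\<lambda>i. 2 * i + 2) {..<m})" for m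
  define Num' Den' :: rat
    where "Num' = of_int (prod_prime_to p (\<lambda>i. 2 * i + 1) {n..<n + M})"
      and "Den' = of_int (prod_prime_to p (\<lambda>i. 2 * i + 2) {n..<n + M})"
  have B_cong: "padic_dvd p (t + 1) (B (n + M) - B n)"
    using padic_dvd_of_int[OF boundary_factor_cong[OF prime_gt_0_nat[OF prime_p], of t n z]]
    unfolding B_def M_def by simp
  have not_dvd: "\<not> int p dvd prod_prime_to p f I" for f I
    by (rule prod_prime_to_not_dvd[OF prime_p])
  then have "Den n \<noteq> 0" "Den' \<noteq> 0"
    unfolding Den_def Den'_def by (metis dvd_0_right of_int_eq_0_iff)+
  have block_cong: "padic_dvd p (t + 1) (Num' - Den')"
    unfolding Num'_def Den'_def M_def by (rule padic_dvd_block_diff)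
  have "padic_dvd p 0 (Num n * Num' / (Den n * Den'))"
    unfolding Num_def Num'_def Den_def Den'_def of_int_mult[symmetric]
    by (intro padic_dvd_divide_unit padic_dvd_integral_of_int not_dvd_mult not_dvd)
  then have "padic_dvd p (t + 1) ((B (n + M) - B n) * (Num n * Num' / (Den n * Den')))"
    by (rule padic_dvd_mult_integral_right[OF B_cong])
  moreover have "padic_dvd p (t + 1) (dwork_quotient p n * ((Num' - Den') / Den'))"
    unfolding Den'_def
    by (intro padic_dvd_mult_integral_left dwork_quotient_integral padic_dvd_divide_unit
        block_cong[unfolded Den'_def] not_dvd)
  moreover have "dwork_quotient p (n + M) = B (n + M) * (Num n * Num') / (Den n * Den')"
    "dwork_quotient p n = B n * Num n / Den n"
    unfolding dwork_quotient_def B_def Num_def Den_def Num'_def Den'_def prod_prime_to_lessThan_add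
    by simp_all
  moreover have "b' * (x * x') / (y * y') - b * x / y
      = (b' - b) * (x * x' / (y * y')) + b * x / y * ((x' - y') / y')"
    if "y \<noteq> 0" "y' \<noteq> 0" for b b' x x' y y' :: rat
    using that by (simp add: field_simps)
  ultimately show ?thesis
    using \<open>Den n \<noteq> 0\<close> \<open>Den' \<noteq> 0\<close> unfolding M_def by (simp add: padic_dvd_add)
qed

lemma dwork_family_poch_half_power:
  "dwork_family p (\<lambda>n. poch_half n ^ k) (\<lambda>n. dwork_quotient p n ^ k)"
proof unfold_locales
  show "poch_half n ^ k = dwork_quotient p n ^ k * poch_half (n div p) ^ k" for n
    by (subst poch_half_factor) (simp add: power_mult_distrib)
  show "padic_dvd p 0 (dwork_quotient p n ^ k)" for n
    by (intro padic_dvd_integral_power dwork_quotient_integral)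
  show "padic_dvd p (t + 1) (dwork_quotient p (n + z * p ^ (t + 1)) ^ k - dwork_quotient p n ^ k)"
    for n z t
    by (intro padic_dvd_power_diff dwork_quotient_integral dwork_quotient_cong)
qed simp

end

theorem mainTheorem3:
  fixes k p s :: nat
  assumes "k \<ge> 2" and "prime p" and "odd p" and "s \<ge> 1"
  shows "fps_cong_pow p s
           (hypF k / (hypF k oo fps_X ^ p))
           (fps_trunc (p ^ s) (hypF k) / (fps_trunc (p ^ (s - 1)) (hypF k) oo fps_X ^ p))"
proof -
  interpret odd_prime p
    using assms by unfold_locales
  interpret dwork_family p "\<lambda>n. poch_half n ^ k" "\<lambda>n. dwork_quotient p n ^ k"
    by (rule dwork_family_poch_half_power)
  obtain r where "s = Suc r"
    using \<open>s \<ge> 1\<close> by (cases s) auto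
  moreover have "hypF k = Abs_fps (\<lambda>n. poch_half n ^ k)"
    by (simp add: hypF_def poch_half_def)
  ultimately show ?thesis
    using dwork_fps_congruence[of r] by simp
qed

end
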